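(* Let $N\ge 1$, let $x_1,\dots,x_{2N-1}\in\mathbb{C}$ and let $z_1,\dots,z_N\in\mathbb{C}$ be pairwise distinct and distinct from all $x_i$. Then $$-\sum_{r=1}^N\Big(\prod_{i=1}^{2N-1}(z_r-x_i)\Big)\Big(\prod_{s=1,\,s\ne r}^N\frac{1}{(z_r-z_s)^2}\Big)\Big(\sum_{i=1}^{2N-1}\frac{1}{2(z_r-x_i)}-\sum_{s=1,\,s\ne r}^N\frac{1}{z_r-z_s}\Big)=-\frac12 .$$ *)

theory Defs
  imports Complex_Main
begin

end

theory Submission
  imports Defs "HOL-Computational_Algebra.Polynomial"
begin

text \<open>
  With \<open>P = \<Prod>i. (X - x\<^sub>i)\<close> and \<open>Q = \<Prod>r. (X - z\<^sub>r)\<close>, the \<open>r\<close>-th summand is half the residue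
  of \<open>P / Q\<^sup>2\<close> at its double pole \<open>z\<^sub>r\<close>. As \<open>P\<close> is monic of degree \<open>2N - 1\<close>,
  \<open>P / Q\<^sup>2 \<sim> 1 / X\<close> at infinity, so these residues add up to 1. Algebraically: Hermite
  interpolation writes \<open>P = \<Sum>r. (\<alpha>\<^sub>r (X - z\<^sub>r) + \<beta>\<^sub>r) L\<^sub>r\<^sup>2\<close> with
  \<open>L\<^sub>r = \<Prod>s\<noteq>r. (X - z\<^sub>s)\<close> and \<open>\<alpha>\<^sub>r\<close> the residue, and comparing the coefficients of
  \<open>X^(2N - 1)\<close> gives \<open>\<Sum>r. \<alpha>\<^sub>r = 1\<close>. The interpolant equals \<open>P\<close> because their
  difference has a double root at every \<open>z\<^sub>r\<close> but degree below \<open>2N\<close>.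
\<close>

lemma poly_pderiv_prod_linear:
  fixes y :: "'b \<Rightarrow> 'a::field"
  assumes "finite A" and "\<And>a. a \<in> A \<Longrightarrow> w \<noteq> y a"
  shows "poly (pderiv (\<Prod>a\<in>A. [:-y a, 1:])) w = (\<Prod>a\<in>A. w - y a) * (\<Sum>a\<in>A. 1 / (w - y a))"
proof -
  have "poly (pderiv (\<Prod>a\<in>A. [:-y a, 1:])) w = (\<Sum>a\<in>A. \<Prod>b\<in>A-{a}. w - y b)"
    by (simp add: pderiv_prod poly_sum poly_prod pderiv_pCons)
  also have "\<dots> = (\<Sum>a\<in>A. (\<Prod>b\<in>A. w - y b) * (1 / (w - y a)))"
  proof (rule sum.cong[OF refl])
    fix a assume "a \<in> A"
    then show "(\<Prod>b\<in>A-{a}. w - y b) = (\<Prod>b\<in>A. w - y b) * (1 / (w - y a))"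
      using prod.remove[OF assms(1), of a "\<lambda>b. w - y b"] assms(2)[of a] by (simp add: field_simps)
  qed
  finally show ?thesis by (simp add: sum_distrib_left)
qed

lemma pderiv_sum: "pderiv (\<Sum>x\<in>A. f x) = (\<Sum>x\<in>A. pderiv (f x))"
  using higher_pderiv_sum[of 1 f A] by simp

lemma linear_square_dvd_if_double_root:
  fixes p :: "'a::idom poly"
  assumes "poly p a = 0" and "poly (pderiv p) a = 0"
  shows "[:-a, 1:]^2 dvd p"
proof -
  obtain q where q: "p = [:-a, 1:] * q" using assms(1) poly_eq_0_iff_dvd by blast
  then have "poly (pderiv p) a = poly q a" unfolding q pderiv_mult by (simp add: pderiv_pCons)
  then obtain q' where "q = [:-a, 1:] * q'" using assms(2) by (metis dvdE poly_eq_0_iff_dvd)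
  then have "p = [:-a, 1:]^2 * q'" by (simp only: q power2_eq_square mult.assoc)
  then show ?thesis by simp
qed

lemma degree_ge_twice_card_double_roots:
  fixes p :: "'a::idom poly"
  assumes "p \<noteq> 0"
    and "\<And>a. a \<in> Z \<Longrightarrow> poly p a = 0" and "\<And>a. a \<in> Z \<Longrightarrow> poly (pderiv p) a = 0"
  shows "2 * card Z \<le> degree p"
proof -
  have "2 * card Z = (\<Sum>a\<in>Z. 2)" by simp
  also have "\<dots> \<le> (\<Sum>a\<in>Z. order a p)"
    using assms by (intro sum_mono) (metis linear_square_dvd_if_double_root order_divides)
  also have "\<dots> \<le> (\<Sum>a | poly p a = 0. order a p)"
    using assms poly_roots_finite[OF assms(1)] by (intro sum_mono2) auto
  also have "\<dots> \<le> degree p"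
    using assms(1) by (rule sum_order_le_degree)
  finally show ?thesis .
qed

lemma poly_mult_square_at_root:
  fixes Q R :: "'a::idom poly"
  assumes "poly Q b = 0"
  shows "poly (R * Q^2) b = 0" and "poly (pderiv (R * Q^2)) b = 0"
  using assms by (simp_all add: pderiv_mult pderiv_power_Suc power2_eq_square)

lemma poly_pderiv_linear_times_square:
  fixes L :: "'a::idom poly" and \<alpha> \<beta> a :: 'a
  defines "T \<equiv> (smult \<alpha> [:-a, 1:] + [:\<beta>:]) * L^2"
  shows "poly T a = \<beta> * (poly L a)^2"
    and "poly (pderiv T) a = \<alpha> * (poly L a)^2 + 2 * \<beta> * poly L a * poly (pderiv L) a"
  unfolding T_def pderiv_mult pderiv_add pderiv_smult power2_eq_square
  by (simp_all add: pderiv_pCons algebra_simps)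

text \<open>The residue of \<open>P / (\<Prod>b\<in>Z. X - b)\<^sup>2\<close> at the node \<open>a\<close>, i.e. the derivative at \<open>a\<close>
  of \<open>P / (\<Prod>b\<in>Z-{a}. X - b)\<^sup>2\<close>.\<close>

definition double_pole_residue :: "'a::field poly \<Rightarrow> 'a set \<Rightarrow> 'a \<Rightarrow> 'a" where
  "double_pole_residue P Z a =
     (poly (pderiv P) a - 2 * poly P a * (\<Sum>b\<in>Z-{a}. 1 / (a - b))) / (\<Prod>b\<in>Z-{a}. a - b)^2"

definition node_poly :: "'a::comm_ring_1 set \<Rightarrow> 'a \<Rightarrow> 'a poly" where
  "node_poly Z a = (\<Prod>b\<in>Z-{a}. [:-b, 1:])"

lemma poly_node_poly_self: "poly (node_poly Z a) a = (\<Prod>b\<in>Z-{a}. a - b)"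
  by (simp add: node_poly_def poly_prod)

lemma poly_node_poly_other: "finite Z \<Longrightarrow> b \<in> Z \<Longrightarrow> b \<noteq> a \<Longrightarrow> poly (node_poly Z a) b = 0"
  by (simp add: node_poly_def poly_prod) (rule prod_zero, auto)

lemma poly_pderiv_node_poly_self:
  fixes Z :: "'a::field set"
  assumes "finite Z"
  shows "poly (pderiv (node_poly Z a)) a = (\<Prod>b\<in>Z-{a}. a - b) * (\<Sum>b\<in>Z-{a}. 1 / (a - b))"
  unfolding node_poly_def using assms by (intro poly_pderiv_prod_linear) auto

lemma lead_coeff_node_poly: "lead_coeff (node_poly Z (a::'a::idom)) = 1"
  by (simp add: node_poly_def lead_coeff_prod)

lemma degree_node_poly: "finite Z \<Longrightarrow> a \<in> Z \<Longrightarrow> degree (node_poly Z (a::'a::idom)) = card Z - 1"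
  by (simp add: node_poly_def degree_prod_eq_sum_degree)

definition hermite_term :: "'a::field poly \<Rightarrow> 'a set \<Rightarrow> 'a \<Rightarrow> 'a poly" where
  "hermite_term P Z a =
     (smult (double_pole_residue P Z a) [:-a, 1:] + [:poly P a / (\<Prod>b\<in>Z-{a}. a - b)^2:])
     * (node_poly Z a)^2"

lemma hermite_term_self:
  assumes "finite Z"
  shows "poly (hermite_term P Z a) a = poly P a"
    and "poly (pderiv (hermite_term P Z a)) a = poly (pderiv P) a"
proof -
  have "(\<Prod>b\<in>Z-{a}. a - b) \<noteq> 0"
    using assms by simp
  then show "poly (hermite_term P Z a) a = poly P a"
    and "poly (pderiv (hermite_term P Z a)) a = poly (pderiv P) a"
    unfolding hermite_term_def poly_pderiv_linear_times_square poly_node_poly_self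
      poly_pderiv_node_poly_self[OF assms]
    by (simp_all add: double_pole_residue_def field_simps power2_eq_square)
qed

lemma hermite_term_other:
  assumes "finite Z" and "b \<in> Z" and "b \<noteq> a"
  shows "poly (hermite_term P Z a) b = 0" and "poly (pderiv (hermite_term P Z a)) b = 0"
  unfolding hermite_term_def
  using poly_mult_square_at_root poly_node_poly_other[OF assms] by blast+

lemma degree_hermite_term:
  assumes "finite Z" and "a \<in> Z"
  shows "degree (hermite_term P Z a) \<le> 2 * card Z - 1"
    and "coeff (hermite_term P Z a) (2 * card Z - 1) = double_pole_residue P Z a"
proof -
  have "node_poly Z a \<noteq> 0"
    using lead_coeff_node_poly[of Z a] by auto
  then have deg_square: "degree ((node_poly Z a)^2) = 2 * card Z - 2"
    using assms by (simp add: degree_power_eq degree_node_poly)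
  have "card Z \<ge> 1"
    using assms by (auto simp: Suc_le_eq card_gt_0_iff)
  then have top: "2 * card Z - 1 = Suc (degree ((node_poly Z a)^2))"
    using deg_square by simp
  have "degree (hermite_term P Z a) \<le> 1 + degree ((node_poly Z a)^2)"
    unfolding hermite_term_def by (rule order.trans[OF degree_mult_le]) (auto intro: degree_add_le)
  then show "degree (hermite_term P Z a) \<le> 2 * card Z - 1"
    using top by simp
  show "coeff (hermite_term P Z a) (2 * card Z - 1) = double_pole_residue P Z a"
    unfolding top using lead_coeff_node_poly[of Z a]
    by (simp add: hermite_term_def lead_coeff_power algebra_simps coeff_eq_0)
qed

lemma hermite_interpolation:
  fixes P :: "'a::field poly"
  assumes fin: "finite Z" and deg: "degree P < 2 * card Z"
  shows "P = (\<Sum>a\<in>Z. hermite_term P Z a)" (is "P = ?H")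
proof -
  have "poly ?H a = poly P a \<and> poly (pderiv ?H) a = poly (pderiv P) a" if a: "a \<in> Z" for a
  proof -
    have "poly (hermite_term P Z b) a = 0 \<and> poly (pderiv (hermite_term P Z b)) a = 0"
      if "b \<in> Z - {a}" for b
      using hermite_term_other[OF fin a] that by auto
    then have "poly (\<Sum>b\<in>Z-{a}. hermite_term P Z b) a = 0
        \<and> poly (pderiv (\<Sum>b\<in>Z-{a}. hermite_term P Z b)) a = 0"
      by (simp add: poly_sum pderiv_sum)
    then show ?thesis
      using sum.remove[OF fin a, of "hermite_term P Z"] hermite_term_self[OF fin, of P a]
      by (simp add: pderiv_add)
  qed
  then have "P - ?H = 0 \<or> 2 * card Z \<le> degree (P - ?H)"
    using degree_ge_twice_card_double_roots[of "P - ?H" Z] by (auto simp: pderiv_diff)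
  moreover have "degree ?H \<le> 2 * card Z - 1"
    using fin degree_hermite_term by (intro degree_sum_le) auto
  then have "degree (P - ?H) < 2 * card Z"
    using deg degree_diff_le[of P "2 * card Z - 1" ?H] by linarith
  ultimately show ?thesis
    by simp
qed

lemma coeff_eq_sum_double_pole_residues:
  fixes P :: "'a::field poly"
  assumes "finite Z" and "degree P < 2 * card Z"
  shows "coeff P (2 * card Z - 1) = (\<Sum>a\<in>Z. double_pole_residue P Z a)"
proof -
  define H where "H = (\<Sum>a\<in>Z. hermite_term P Z a)"
  have "P = H"
    unfolding H_def using assms by (rule hermite_interpolation)
  then have "coeff P (2 * card Z - 1) = coeff H (2 * card Z - 1)"
    by simp
  also have "\<dots> = (\<Sum>a\<in>Z. coeff (hermite_term P Z a) (2 * card Z - 1))"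
    by (simp add: H_def coeff_sum)
  also have "\<dots> = (\<Sum>a\<in>Z. double_pole_residue P Z a)"
    using degree_hermite_term(2)[OF assms(1)] by (rule sum.cong[OF refl])
  finally show ?thesis .
qed

lemma double_pole_residue_image:
  assumes "inj_on z A" and "r \<in> A"
  shows "double_pole_residue P (z ` A) (z r) =
    (poly (pderiv P) (z r) - 2 * poly P (z r) * (\<Sum>s\<in>A-{r}. 1 / (z r - z s)))
      / (\<Prod>s\<in>A-{r}. z r - z s)^2"
proof -
  have "z ` A - {z r} = z ` (A - {r})" and "inj_on z (A - {r})"
    using assms by (auto simp: inj_on_def)
  then show ?thesis
    by (simp add: double_pole_residue_def sum.reindex prod.reindex)
qed

lemma double_pole_residue_prod_linear:
  fixes x z :: "'b \<Rightarrow> 'a::field_char_0"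
  assumes "finite I" and "inj_on z A" and r: "r \<in> A" and "\<And>i. i \<in> I \<Longrightarrow> z r \<noteq> x i"
  shows "(\<Prod>i\<in>I. z r - x i) * (\<Prod>s\<in>A-{r}. 1 / (z r - z s)^2)
      * ((\<Sum>i\<in>I. 1 / (2 * (z r - x i))) - (\<Sum>s\<in>A-{r}. 1 / (z r - z s)))
      = double_pole_residue (\<Prod>i\<in>I. [:-x i, 1:]) (z ` A) (z r) / 2"
proof -
  have P_z: "poly (\<Prod>i\<in>I. [:-x i, 1:]) (z r) = (\<Prod>i\<in>I. z r - x i)"
    by (simp add: poly_prod)
  have P'_z: "poly (pderiv (\<Prod>i\<in>I. [:-x i, 1:])) (z r) = (\<Prod>i\<in>I. z r - x i) * (\<Sum>i\<in>I. 1 / (z r - x i))"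
    using assms(1,4) by (rule poly_pderiv_prod_linear)
  have half: "(\<Sum>i\<in>I. 1 / (2 * (z r - x i))) = (\<Sum>i\<in>I. 1 / (z r - x i)) / 2"
    by (simp add: sum_divide_distrib mult.commute)
  have inverse_square: "(\<Prod>s\<in>A-{r}. 1 / (z r - z s)^2) = 1 / (\<Prod>s\<in>A-{r}. z r - z s)^2"
    by (simp add: prod_dividef prod_power_distrib)
  have "(\<Prod>s\<in>A-{r}. z r - z s) \<noteq> 0"
    using assms(2) r by (cases "finite A") (auto simp: inj_on_def)
  then show ?thesis
    unfolding double_pole_residue_image[OF assms(2) r] P_z P'_z half inverse_square
    by (simp add: field_simps)
qed

theorem mainTheorem2:
  fixes N :: nat and x z :: "nat \<Rightarrow> complex"
  assumes "N \<ge> 1"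
    and "\<And>r s. r \<in> {1..N} \<Longrightarrow> s \<in> {1..N} \<Longrightarrow> r \<noteq> s \<Longrightarrow> z r \<noteq> z s"
    and "\<And>r i. r \<in> {1..N} \<Longrightarrow> i \<in> {1..2*N-1} \<Longrightarrow> z r \<noteq> x i"
  shows "- (\<Sum>r=1..N. (\<Prod>i=1..2*N-1. z r - x i)
            * (\<Prod>s\<in>{1..N}-{r}. 1 / (z r - z s)^2)
            * ((\<Sum>i=1..2*N-1. 1 / (2 * (z r - x i))) - (\<Sum>s\<in>{1..N}-{r}. 1 / (z r - z s))))
         = - 1 / 2"
proof -
  define P where "P = (\<Prod>i=1..2*N-1. [:-x i, 1:])"
  have inj: "inj_on z {1..N}"
    using assms(2) unfolding inj_on_def by blast
  have "degree P = 2 * N - 1"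
    by (simp add: P_def degree_prod_eq_sum_degree)
  moreover have "lead_coeff P = 1"
    by (simp add: P_def lead_coeff_prod)
  ultimately have residues: "(\<Sum>r=1..N. double_pole_residue P (z ` {1..N}) (z r)) = 1"
    using coeff_eq_sum_double_pole_residues[of "z ` {1..N}" P] assms(1) inj
    by (simp add: sum.reindex card_image)
  have "(\<Sum>r=1..N. (\<Prod>i=1..2*N-1. z r - x i) * (\<Prod>s\<in>{1..N}-{r}. 1 / (z r - z s)^2)
      * ((\<Sum>i=1..2*N-1. 1 / (2 * (z r - x i))) - (\<Sum>s\<in>{1..N}-{r}. 1 / (z r - z s))))
      = (\<Sum>r=1..N. double_pole_residue P (z ` {1..N}) (z r) / 2)"
    unfolding P_def using inj assms(3)
    by (intro sum.cong refl double_pole_residue_prod_linear) auto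
  also have "\<dots> = 1 / 2"
    using residues by (simp flip: sum_divide_distrib)
  finally show ?thesis by simp
qed

end
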